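(* Let $q\ge 3$ be a prime power and $n\ge 2d\ge 2$. For all $0\le i\le d-1$ and $1\le j\le d$, $$|G_j(i+1)|<|G_j(i)|.$$
   Context: For integers $m\ge 0$ and $l$, ${m\brack l}=\prod_{t=1}^{l}\frac{q^{m-t+1}-1}{q^t-1}$ for $l\ge0$ and $0$ for $l<0$. For $0\le i,j\le d$, $$G_j(i)=\sum_{h=\max\{0,i-j\}}^{\min\{i,d-j\}}(-1)^{i-h}q^{j(j-i+h)+\binom{i-h}{2}}{i\brack h}{d-h\brack j}{n-d-i+h\brack n-d-j};$$ $G_j(i)$ ($0\le i\le d$) are the eigenvalues of the Grassmann graph $G_q(n,d,j)$, whose vertices are the $d$-dimensional subspaces of $\mathbb F_q^n$, two being adjacent iff their intersection has dimension $d-j$. *)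

theory Defs
  imports Complex_Main "HOL-Computational_Algebra.Primes"
begin

definition gbinom :: "real \<Rightarrow> int \<Rightarrow> int \<Rightarrow> real" where
  "gbinom q m l = (if l < 0 then 0 else
     (\<Prod>t\<in>{1..l}. (q ^ nat (m - t + 1) - 1) / (q ^ nat t - 1)))"

text \<open>Eigenvalue G_j(i) of the Grassmann graph G_q(n,d,j).\<close>
definition Geig :: "real \<Rightarrow> int \<Rightarrow> int \<Rightarrow> int \<Rightarrow> int \<Rightarrow> real" where
  "Geig q n d j i = (\<Sum>h\<in>{max 0 (i - j)..min i (d - j)}.
      (-1) ^ nat (i - h) * q ^ (nat (j * (j - i + h)) + (nat (i - h) choose 2))
      * gbinom q i h * gbinom q (d - h) j * gbinom q (n - d - i + h) (n - d - j))"

end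

theory Submission
  imports Defs
begin

text \<open>With \<open>k = i - h\<close>, \<open>G_j(i) = \<Sum>\<^sub>k (-1)^k T_i(k)\<close> where the terms \<open>T_i(k) \<ge> 0\<close> vanish below
  \<open>k\<^sub>0 = max 0 (i + j - d)\<close> and decrease from there on, so that
  \<open>T_i(k\<^sub>0) - T_i(k\<^sub>0 + 1) \<le> |G_j(i)| \<le> T_i(k\<^sub>0)\<close>. The ratios of the terms involved are
  quotients of products of factors \<open>q^e - 1\<close>, and for \<open>q \<ge> 3\<close> they give
  \<open>T_(i+1)(k\<^sub>0') + T_i(k\<^sub>0 + 1) < T_i(k\<^sub>0)\<close>, where \<open>k\<^sub>0'\<close> is the starting index for \<open>i + 1\<close>.\<close>

section \<open>Gaussian binomial coefficients\<close>

definition qbinom :: "real \<Rightarrow> nat \<Rightarrow> nat \<Rightarrow> real" where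
  "qbinom q m l = (\<Prod>t\<in>{1..l}. (q ^ (m + 1 - t) - 1) / (q ^ t - 1))"

lemma qbinom_0 [simp]: "qbinom q m 0 = 1"
  by (simp add: qbinom_def)

lemma qbinom_Suc: "qbinom q m (Suc l) = qbinom q m l * (q ^ (m - l) - 1) / (q ^ Suc l - 1)"
proof -
  have "{1..Suc l} = insert (Suc l) {1..l}" by auto
  then show ?thesis by (simp add: qbinom_def)
qed

lemma qbinom_Suc_right:
  assumes "q > 1"
  shows "qbinom q m (Suc l) * (q ^ Suc l - 1) = qbinom q m l * (q ^ (m - l) - 1)"
proof -
  have "q ^ Suc l - 1 \<noteq> 0" using one_less_power[OF assms, of "Suc l"] by simp
  then show ?thesis by (simp add: qbinom_Suc)
qed

lemma qbinom_eq_0: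
  assumes "q > 1" "m < l"
  shows "qbinom q m l = 0"
  using assms(2)
proof (induction l)
  case (Suc l)
  then have "m < l \<or> m = l" by auto
  then show ?case using Suc.IH by (auto simp: qbinom_Suc)
qed simp

lemma qbinom_pos:
  assumes "q > 1" "l \<le> m"
  shows "qbinom q m l > 0"
  using assms(2)
proof (induction l)
  case (Suc l)
  have "q ^ (m - l) > 1" "q ^ Suc l > 1"
    using one_less_power[OF assms(1), of "m - l"] one_less_power[OF assms(1), of "Suc l"] Suc.prems
    by auto
  with Suc show ?case by (simp add: qbinom_Suc)
qed simp

lemma qbinom_nonneg:
  assumes "q > 1"
  shows "qbinom q m l \<ge> 0"
  using qbinom_pos[OF assms, of l m] qbinom_eq_0[OF assms, of m l] by (cases "l \<le> m") auto

lemma qbinom_Suc_left: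
  assumes "q > 1" "l \<le> m"
  shows "qbinom q (Suc m) l * (q ^ (Suc m - l) - 1) = qbinom q m l * (q ^ Suc m - 1)"
  using assms(2)
proof (induction l)
  case (Suc l)
  have IH: "qbinom q (Suc m) l * (q ^ Suc (m - l) - 1) = qbinom q m l * (q ^ Suc m - 1)"
    using Suc by (simp add: Suc_diff_le)
  have "qbinom q (Suc m) (Suc l) * (q ^ (Suc m - Suc l) - 1)
      = qbinom q (Suc m) l * (q ^ Suc (m - l) - 1) * (q ^ (m - l) - 1) / (q ^ Suc l - 1)"
    using Suc.prems by (simp add: qbinom_Suc Suc_diff_le)
  also have "\<dots> = qbinom q m l * (q ^ Suc m - 1) * (q ^ (m - l) - 1) / (q ^ Suc l - 1)"
    by (simp only: IH)
  also have "\<dots> = qbinom q m (Suc l) * (q ^ Suc m - 1)"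
    by (simp add: qbinom_Suc)
  finally show ?case .
qed simp

lemma qbinom_self:
  assumes "q > 1"
  shows "qbinom q m m = 1"
proof (induction m)
  case (Suc m)
  have "qbinom q (Suc m) (Suc m) * (q ^ Suc m - 1) = qbinom q (Suc m) m * (q ^ (Suc m - m) - 1)"
    by (rule qbinom_Suc_right[OF assms])
  also have "\<dots> = q ^ Suc m - 1"
    using qbinom_Suc_left[OF assms, of m m] Suc.IH by simp
  finally show ?case using one_less_power[OF assms, of "Suc m"] by simp
qed simp

lemma gbinom_of_nat: "gbinom q (int m) (int l) = qbinom q m l"
proof -
  have "gbinom q (int m) (int l)
      = (\<Prod>t\<in>int ` {1..l}. (q ^ nat (int m - t + 1) - 1) / (q ^ nat t - 1))"
    by (simp add: gbinom_def image_int_atLeastAtMost)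
  also have "\<dots> = (\<Prod>t\<in>{1..l}. (q ^ nat (int m - int t + 1) - 1) / (q ^ nat (int t) - 1))"
    by (simp add: prod.reindex)
  also have "\<dots> = qbinom q m l"
  proof (unfold qbinom_def, intro prod.cong refl)
    fix t
    have "nat (int m - int t + 1) = m + 1 - t" by linarith
    then show "(q ^ nat (int m - int t + 1) - 1) / (q ^ nat (int t) - 1)
      = (q ^ (m + 1 - t) - 1) / (q ^ t - 1)" by simp
  qed
  finally show ?thesis .
qed


section \<open>Alternating sums of antitone terms\<close>

lemma alternating_sum_bounds:
  fixes f :: "nat \<Rightarrow> real"
  assumes "\<And>p. p < N \<Longrightarrow> f (Suc p) \<le> f p" and "\<And>p. p \<le> N \<Longrightarrow> 0 \<le> f p"
  shows "0 \<le> (\<Sum>p\<le>N. (-1) ^ p * f p) \<and> (\<Sum>p\<le>N. (-1) ^ p * f p) \<le> f 0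
    \<and> (0 < N \<longrightarrow> f 0 - f 1 \<le> (\<Sum>p\<le>N. (-1) ^ p * f p))"
  using assms
proof (induction N arbitrary: f)
  case (Suc N)
  have IH: "0 \<le> (\<Sum>p\<le>N. (-1) ^ p * f (Suc p)) \<and> (\<Sum>p\<le>N. (-1) ^ p * f (Suc p)) \<le> f 1"
    using Suc.IH[of "\<lambda>p. f (Suc p)"] Suc.prems by auto
  have "(\<Sum>p\<le>Suc N. (-1) ^ p * f p) = f 0 - (\<Sum>p\<le>N. (-1) ^ p * f (Suc p))"
    by (subst sum.atMost_Suc_shift) (simp add: sum_negf)
  moreover have "f 1 \<le> f 0" using Suc.prems(1)[of 0] by simp
  ultimately show ?case using IH by auto
qed simp

lemma abs_alternating_sum_bounds:
  fixes f :: "nat \<Rightarrow> real"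
  assumes "l \<le> N" and zero: "\<And>k. k < l \<Longrightarrow> f k = 0"
    and antitone: "\<And>k. l \<le> k \<Longrightarrow> k < N \<Longrightarrow> f (Suc k) \<le> f k"
    and nonneg: "\<And>k. 0 \<le> f k"
  shows "\<bar>\<Sum>k\<le>N. (-1) ^ k * f k\<bar> \<le> f l"
    and "f l - f (Suc l) \<le> \<bar>\<Sum>k\<le>N. (-1) ^ k * f k\<bar>"
proof -
  have "(\<Sum>k\<le>N. (-1) ^ k * f k) = (\<Sum>k\<in>{..<l} \<union> {l..N}. (-1) ^ k * f k)"
    using \<open>l \<le> N\<close> by (intro sum.cong) auto
  also have "\<dots> = (\<Sum>k\<in>{l..N}. (-1) ^ k * f k)"
    using zero by (subst sum.union_disjoint) auto
  also have "\<dots> = (\<Sum>p\<le>N - l. (-1) ^ (l + p) * f (l + p))"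
    using sum.shift_bounds_cl_nat_ivl[of "\<lambda>k. (-1) ^ k * f k" 0 l "N - l"] \<open>l \<le> N\<close>
    by (simp add: atLeast0AtMost add.commute)
  also have "\<dots> = (-1) ^ l * (\<Sum>p\<le>N - l. (-1) ^ p * f (l + p))"
    by (simp add: sum_distrib_left power_add mult.assoc)
  finally have shift: "\<bar>\<Sum>k\<le>N. (-1) ^ k * f k\<bar> = \<bar>\<Sum>p\<le>N - l. (-1) ^ p * f (l + p)\<bar>"
    by (simp add: abs_mult)
  have bounds: "0 \<le> (\<Sum>p\<le>N - l. (-1) ^ p * f (l + p))
      \<and> (\<Sum>p\<le>N - l. (-1) ^ p * f (l + p)) \<le> f (l + 0)
      \<and> (0 < N - l \<longrightarrow> f (l + 0) - f (l + 1) \<le> (\<Sum>p\<le>N - l. (-1) ^ p * f (l + p)))"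
    by (rule alternating_sum_bounds) (use antitone nonneg in auto)
  then show "\<bar>\<Sum>k\<le>N. (-1) ^ k * f k\<bar> \<le> f l" using shift by simp
  show "f l - f (Suc l) \<le> \<bar>\<Sum>k\<le>N. (-1) ^ k * f k\<bar>"
  proof (cases "l < N")
    case False
    then show ?thesis using shift nonneg[of l] nonneg[of "Suc l"] \<open>l \<le> N\<close> by simp
  qed (use bounds shift in simp)
qed


section \<open>The eigenvalue as an alternating sum\<close>

text \<open>The summand of \<^const>\<open>Geig\<close> for \<open>h = i - k\<close> without its sign \<open>(-1)^k\<close>, written with
  \<open>m = n - d\<close>; it is set to 0 for \<open>k > i\<close>.\<close>
definition eig_term :: "real \<Rightarrow> nat \<Rightarrow> nat \<Rightarrow> nat \<Rightarrow> nat \<Rightarrow> nat \<Rightarrow> real" where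
  "eig_term q m d j i k = (if k \<le> i then
     q ^ (j * (j - k) + (k choose 2)) * qbinom q i (i - k) * qbinom q (d - i + k) j
       * qbinom q (m - k) (m - j) else 0)"

lemma eig_term_nonneg:
  assumes "q > 1"
  shows "0 \<le> eig_term q m d j i k"
  unfolding eig_term_def using qbinom_nonneg[OF assms] assms by auto

lemma eig_term_pos:
  assumes "q > 1" "i \<le> d" "k \<le> i" "k \<le> j" "i + j \<le> d + k"
  shows "0 < eig_term q m d j i k"
  unfolding eig_term_def using qbinom_pos[OF assms(1)] assms by auto

lemma eig_term_eq_0_below:
  assumes "q > 1" "i \<le> d" "k < i + j - d"
  shows "eig_term q m d j i k = 0"
  using qbinom_eq_0[OF assms(1), of "d - i + k" j] assms(2,3) by (simp add: eig_term_def)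

lemma eig_term_eq_0_above:
  assumes "q > 1" "j < k" "k \<le> m"
  shows "eig_term q m d j i k = 0"
  using qbinom_eq_0[OF assms(1), of "m - k" "m - j"] assms(2,3) by (simp add: eig_term_def)

lemma Geig_index_set:
  "{max 0 (int i - int j)..min (int i) (int d - int j)} = (\<lambda>k. int i - int k) ` {i + j - d..min i j}"
proof (intro equalityI subsetI)
  fix h assume h: "h \<in> {max 0 (int i - int j)..min (int i) (int d - int j)}"
  then have "h = int i - int (nat (int i - h))" "nat (int i - h) \<in> {i + j - d..min i j}" by auto
  then show "h \<in> (\<lambda>k. int i - int k) ` {i + j - d..min i j}" by blast
qed auto

lemma Geig_summand_eq:
  assumes k: "k \<in> {i + j - d..min i j}" and "i \<le> d" "d \<le> m"
  shows "(-1) ^ nat (int i - (int i - int k))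
      * q ^ (nat (int j * (int j - int i + (int i - int k))) + (nat (int i - (int i - int k)) choose 2))
      * gbinom q (int i) (int i - int k) * gbinom q (int d - (int i - int k)) (int j)
      * gbinom q (int (m + d) - int d - int i + (int i - int k)) (int (m + d) - int d - int j)
    = (-1) ^ k * eig_term q m d j i k"
proof -
  have "int j * (int j - int i + (int i - int k)) = int (j * (j - k))"
    using k by (simp add: of_nat_diff)
  then have e1: "nat (int j * (int j - int i + (int i - int k))) = j * (j - k)"
    by (simp only: nat_int)
  have e2: "nat (int i - (int i - int k)) = k"
    and e3: "int i - int k = int (i - k)"
    and e4: "int d - (int i - int k) = int (d - i + k)"
    and e5: "int (m + d) - int d - int i + (int i - int k) = int (m - k)"
    and e6: "int (m + d) - int d - int j = int (m - j)"
    using assms by auto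
  show ?thesis
    using k by (simp only: e1 e2 e4 e5 e6, simp only: e3 gbinom_of_nat) (simp add: eig_term_def)
qed

lemma Geig_eq_alternating_sum:
  assumes "q > 1" "i \<le> d" "j \<le> d" "d \<le> m"
  shows "Geig q (int (m + d)) (int d) (int j) (int i) = (\<Sum>k\<le>i. (-1) ^ k * eig_term q m d j i k)"
proof -
  have inj: "inj_on (\<lambda>k. int i - int k) {i + j - d..min i j}"
    by (auto simp: inj_on_def)
  have "Geig q (int (m + d)) (int d) (int j) (int i)
      = (\<Sum>k\<in>{i + j - d..min i j}. (-1) ^ k * eig_term q m d j i k)"
    unfolding Geig_def Geig_index_set sum.reindex[OF inj, unfolded comp_def]
    using assms by (intro sum.cong[OF refl] Geig_summand_eq) auto
  also have "\<dots> = (\<Sum>k\<le>i. (-1) ^ k * eig_term q m d j i k)"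
  proof (rule sum.mono_neutral_left)
    show "\<forall>k\<in>{..i} - {i + j - d..min i j}. (-1) ^ k * eig_term q m d j i k = 0"
      using eig_term_eq_0_below[OF assms(1,2)] eig_term_eq_0_above[OF assms(1)] assms by auto
  qed auto
  finally show ?thesis .
qed


section \<open>Ratios of neighbouring terms\<close>

lemma power_eig_exponent_Suc:
  fixes q :: "'a :: monoid_mult"
  assumes "k < j"
  shows "q ^ (j * (j - k) + (k choose 2)) = q ^ (j - k) * q ^ (j * (j - Suc k) + (Suc k choose 2))"
proof -
  have "j * (j - k) = j * (j - Suc k) + (j - k) + k"
    using assms by (simp add: Suc_diff_Suc[symmetric])
  then have "j * (j - k) + (k choose 2) = (j - k) + (j * (j - Suc k) + (Suc k choose 2))"
    by (simp add: numeral_2_eq_2)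
  then show ?thesis by (metis power_add)
qed

lemma qbinom_top_pred_ratio:
  assumes "q > 1" "k < j" "j \<le> m"
  shows "qbinom q (m - Suc k) (m - j) * (q ^ (m - k) - 1) = qbinom q (m - k) (m - j) * (q ^ (j - k) - 1)"
proof -
  have "Suc (m - Suc k) = m - k" "Suc (m - Suc k) - (m - j) = j - k" "m - j \<le> m - Suc k"
    using assms(2,3) by auto
  with qbinom_Suc_left[OF assms(1), of "m - j" "m - Suc k"] show ?thesis by simp
qed

lemma eig_term_Suc_ratio:
  assumes q: "q > 1" and "i + j \<le> d + k" "k \<le> i" "k < j" "i \<le> d" "j \<le> m"
  shows "q ^ (j - k) * (q ^ Suc k - 1) * (q ^ (d - i + Suc k - j) - 1) * (q ^ (m - k) - 1)
      * eig_term q m d j i (Suc k)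
    = (q ^ (i - k) - 1) * (q ^ (d - i + Suc k) - 1) * (q ^ (j - k) - 1) * eig_term q m d j i k"
proof (cases "k = i")
  case True
  then show ?thesis by (simp add: eig_term_def)
next
  case False
  define c where "c = q ^ (j * (j - Suc k) + (Suc k choose 2))"
  have Tk: "eig_term q m d j i k
      = q ^ (j - k) * c * qbinom q i (i - k) * qbinom q (d - i + k) j * qbinom q (m - k) (m - j)"
    using assms by (simp add: eig_term_def c_def power_eig_exponent_Suc)
  have TSk: "eig_term q m d j i (Suc k)
      = c * qbinom q i (i - Suc k) * qbinom q (d - i + Suc k) j * qbinom q (m - Suc k) (m - j)"
    using False assms by (simp add: eig_term_def c_def)
  have a: "qbinom q i (i - Suc k) * (q ^ Suc k - 1) = qbinom q i (i - k) * (q ^ (i - k) - 1)"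
  proof -
    have "Suc (i - Suc k) = i - k" "i - (i - Suc k) = Suc k" using False assms by auto
    with qbinom_Suc_right[OF q, of i "i - Suc k"] show ?thesis by simp
  qed
  have b: "qbinom q (d - i + Suc k) j * (q ^ (d - i + Suc k - j) - 1)
      = qbinom q (d - i + k) j * (q ^ (d - i + Suc k) - 1)"
    using qbinom_Suc_left[OF q, of j "d - i + k"] assms by simp
  have "q ^ (j - k) * (q ^ Suc k - 1) * (q ^ (d - i + Suc k - j) - 1) * (q ^ (m - k) - 1)
      * eig_term q m d j i (Suc k)
    = q ^ (j - k) * c * (qbinom q i (i - Suc k) * (q ^ Suc k - 1))
      * (qbinom q (d - i + Suc k) j * (q ^ (d - i + Suc k - j) - 1))
      * (qbinom q (m - Suc k) (m - j) * (q ^ (m - k) - 1))"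
    by (simp only: TSk ac_simps)
  also have "\<dots> = (q ^ (i - k) - 1) * (q ^ (d - i + Suc k) - 1) * (q ^ (j - k) - 1) * eig_term q m d j i k"
    unfolding a b qbinom_top_pred_ratio[OF q \<open>k < j\<close> \<open>j \<le> m\<close>] Tk by (simp only: ac_simps)
  finally show ?thesis .
qed

lemma eig_term_Suc_Suc_ratio:
  assumes q: "q > 1" and "k \<le> i" "k < j" "i < d" "j \<le> m"
  shows "q ^ (j - k) * (q ^ Suc k - 1) * (q ^ (m - k) - 1) * eig_term q m d j (Suc i) (Suc k)
    = (q ^ Suc i - 1) * (q ^ (j - k) - 1) * eig_term q m d j i k"
proof -
  define c where "c = q ^ (j * (j - Suc k) + (Suc k choose 2))"
  have Tk: "eig_term q m d j i k
      = q ^ (j - k) * c * qbinom q i (i - k) * qbinom q (d - i + k) j * qbinom q (m - k) (m - j)"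
    using assms by (simp add: eig_term_def c_def power_eig_exponent_Suc)
  have TSS: "eig_term q m d j (Suc i) (Suc k)
      = c * qbinom q (Suc i) (i - k) * qbinom q (d - i + k) j * qbinom q (m - Suc k) (m - j)"
    using assms by (simp add: eig_term_def c_def Suc_diff_Suc)
  have a: "qbinom q (Suc i) (i - k) * (q ^ Suc k - 1) = qbinom q i (i - k) * (q ^ Suc i - 1)"
    using qbinom_Suc_left[OF q, of "i - k" i] assms by (simp add: Suc_diff_le)
  have "q ^ (j - k) * (q ^ Suc k - 1) * (q ^ (m - k) - 1) * eig_term q m d j (Suc i) (Suc k)
    = q ^ (j - k) * c * (qbinom q (Suc i) (i - k) * (q ^ Suc k - 1)) * qbinom q (d - i + k) j
      * (qbinom q (m - Suc k) (m - j) * (q ^ (m - k) - 1))"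
    by (simp only: TSS ac_simps)
  also have "\<dots> = (q ^ Suc i - 1) * (q ^ (j - k) - 1) * eig_term q m d j i k"
    unfolding a qbinom_top_pred_ratio[OF q \<open>k < j\<close> \<open>j \<le> m\<close>] Tk by (simp only: ac_simps)
  finally show ?thesis .
qed

lemma eig_term_Suc_0_ratio:
  assumes q: "q > 1" and "i + j < d"
  shows "(q ^ (d - i) - 1) * eig_term q m d j (Suc i) 0 = (q ^ (d - i - j) - 1) * eig_term q m d j i 0"
proof -
  have "qbinom q (d - i) j * (q ^ (d - i - j) - 1) = qbinom q (d - Suc i) j * (q ^ (d - i) - 1)"
  proof -
    have "Suc (d - Suc i) = d - i" "Suc (d - Suc i) - j = d - i - j" "j \<le> d - Suc i"
      using assms(2) by auto
    with qbinom_Suc_left[OF q, of j "d - Suc i"] show ?thesis by simp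
  qed
  moreover have "eig_term q m d j i' 0 = q ^ (j * j) * qbinom q m (m - j) * qbinom q (d - i') j" for i'
    by (simp add: eig_term_def qbinom_self[OF q] numeral_2_eq_2 mult_ac)
  ultimately show ?thesis by (simp add: mult_ac)
qed


section \<open>Comparison of the leading terms\<close>

text \<open>The offset is the starting index \<open>k\<^sub>0 = i + j - d\<close> (in truncated subtraction): it is zero
  if \<open>i + j < d\<close> and positive otherwise; the two cases need different estimates.\<close>

lemma consecutive_ratio_ineq:
  fixes q B X Y E W :: real
  assumes q: "q \<ge> 3" and B: "B \<ge> 1" and X: "X \<ge> q" and Y: "Y \<ge> q" and E: "E \<ge> q"
    and W: "W \<ge> X * Y"
  shows "(X - 1) * (E * Y * B - 1) * (Y - 1) \<le> Y * (q * B - 1) * (E - 1) * (W - 1)"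
proof -
  have YB: "Y * B \<ge> 3"
    using mult_mono[of 3 Y 1 B] q Y B by simp
  have h1: "(E * Y * B - 1) * (q - 1) \<le> q * Y * B * (E - 1)"
    using mult_right_mono[OF E, of "Y * B"] YB q by (simp add: algebra_simps)
  have h2: "(X - 1) * (Y - 1) \<le> W - 1"
    using W X Y q by (simp add: algebra_simps)
  have h3: "q * B \<le> (q * B - 1) * (q - 1)"
    using mult_mono[of q "q * B" 1 "q - 2"] q B by (simp add: algebra_simps)
  have "(X - 1) * (E * Y * B - 1) * (Y - 1) * (q - 1)
      = ((X - 1) * (Y - 1)) * ((E * Y * B - 1) * (q - 1))"
    by (simp add: algebra_simps)
  also have "\<dots> \<le> ((X - 1) * (Y - 1)) * (q * Y * B * (E - 1))"
    using h1 X Y q by (intro mult_left_mono) auto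
  also have "\<dots> = (Y * (E - 1)) * (((X - 1) * (Y - 1)) * (q * B))"
    by (simp add: algebra_simps)
  also have "\<dots> \<le> (Y * (E - 1)) * ((W - 1) * ((q * B - 1) * (q - 1)))"
  proof (intro mult_left_mono mult_mono[OF h2 h3])
    have "X * Y \<ge> 1" using mult_mono[of 1 X 1 Y] X Y q by simp
    then show "0 \<le> W - 1" using W by simp
  qed (use Y E B q in auto)
  also have "\<dots> = Y * (q * B - 1) * (E - 1) * (W - 1) * (q - 1)"
    by (simp add: algebra_simps)
  finally show ?thesis using q by simp
qed

lemma offset_zero_ratio_ineq:
  fixes q Qa Qj Qi Qm :: real
  assumes q: "q \<ge> 3" and a: "Qa \<ge> q" and j: "Qj \<ge> q" and i: "Qi \<ge> 1" and m: "Qm \<ge> q * Qi * Qj"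
  shows "4 * ((Qi - 1) * (q * Qa * Qj - 1) * (Qj - 1)) \<le> (q - 1) * (q * Qa - 1) * (Qm - 1) * Qj"
proof -
  have qj: "q * Qj \<ge> 1" and qa: "q * Qa \<ge> 1"
    using mult_mono[of 1 q 1 Qj] mult_mono[of 1 q 1 Qa] q a j by auto
  have h1: "(Qi - 1) * (q * Qj) \<le> Qm - 1"
    using m qj by (simp add: algebra_simps)
  have h2: "(q * Qa * Qj - 1) * (q - 1) \<le> q * Qj * (q * Qa - 1)"
  proof -
    have "q * Qj \<le> Qa * (q * Qj)" using mult_right_mono[of 1 Qa "q * Qj"] a q j by simp
    then show ?thesis using q by (simp add: algebra_simps)
  qed
  have qaj: "q * Qa * Qj \<ge> 1"
    using mult_mono[OF qa, of 1 Qj] qa j q by simp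
  have "(Qi - 1) * (q * Qa * Qj - 1) * (Qj - 1) * (q - 1) * (q * Qj)
      = ((Qi - 1) * (q * Qj)) * ((q * Qa * Qj - 1) * (q - 1)) * (Qj - 1)"
    by (simp add: algebra_simps)
  also have "\<dots> \<le> (Qm - 1) * (q * Qj * (q * Qa - 1)) * Qj"
  proof (rule mult_mono[OF mult_mono[OF h1 h2]])
    have "0 \<le> (Qi - 1) * (q * Qj)" using i qj by simp
    then show Qm: "0 \<le> Qm - 1" using h1 by linarith
    show "0 \<le> (Qm - 1) * (q * Qj * (q * Qa - 1))" using Qm qj qa by simp
  qed (use qaj j q in auto)
  also have "\<dots> = ((Qm - 1) * (q * Qa - 1) * Qj) * (q * Qj)"
    by (simp add: algebra_simps)
  finally have h4: "(Qi - 1) * (q * Qa * Qj - 1) * (Qj - 1) * (q - 1) \<le> (Qm - 1) * (q * Qa - 1) * Qj"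
    using q j by (simp only: mult_le_cancel_right) auto
  let ?N = "(Qi - 1) * (q * Qa * Qj - 1) * (Qj - 1)"
  have "4 \<le> (q - 1) * (q - 1)"
    using mult_mono[of 2 "q - 1" 2 "q - 1"] q by simp
  then have "4 * ?N \<le> ((q - 1) * (q - 1)) * ?N"
    using i j q qaj by (intro mult_right_mono) auto
  also have "\<dots> = (q - 1) * (?N * (q - 1))"
    by (simp only: mult_ac)
  also have "\<dots> \<le> (q - 1) * ((Qm - 1) * (q * Qa - 1) * Qj)"
    using h4 q by (intro mult_left_mono) auto
  finally show ?thesis by (simp only: mult_ac)
qed

lemma offset_pos_ratio_ineq:
  fixes q B U V W :: real
  assumes q: "q \<ge> 3" and B: "B \<ge> 1" and U: "U \<ge> 1" and V: "V \<ge> q" and W: "W \<ge> U * V"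
  shows "(V - 1) * ((q * B * U - 1) * (q - 1) + (U - 1) * (q * B * V - 1))
    < V * (q - 1) * (q * B - 1) * (W - 1)"
proof -
  define A where "A = q * B"
  have A: "A \<ge> 3"
    using mult_mono[of 3 q 1 B] q B unfolding A_def by simp
  have "q * (2 * q - 5) \<ge> 3 * (q - 2)"
    using mult_nonneg_nonneg[of "q - 1" "q - 3"] q by (simp add: algebra_simps)
  then have "V * (2 * q - 5) \<ge> 3 * (q - 2)"
    using mult_right_mono[OF V, of "2 * q - 5"] q by linarith
  then have "V * V * (2 * q - 5) \<ge> 3 * (q - 2) * V"
    using mult_left_mono[of "3 * (q - 2)" "V * (2 * q - 5)" V] V q by (simp add: algebra_simps)
  then have s: "3 * ((V - 1) * (V + q - 1)) \<le> 2 * (V * V * (q - 1))"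
    using q by (simp add: algebra_simps)
  have slope: "(V - 1) * (A * (q - 1) + A * V - 1) \<le> V * V * (q - 1) * (A - 1)"
  proof -
    have "3 * ((V - 1) * (A * (q - 1) + A * V - 1)) \<le> 3 * ((V - 1) * (V + q - 1)) * A"
      using V q A by (simp add: algebra_simps)
    also have "\<dots> \<le> 2 * (V * V * (q - 1)) * A"
      using s A by (intro mult_right_mono) auto
    also have "\<dots> = (V * V * (q - 1)) * (2 * A)"
      by (simp only: mult_ac)
    also have "\<dots> \<le> (V * V * (q - 1)) * (3 * (A - 1))"
      using A q V by (intro mult_left_mono) auto
    finally show ?thesis by (simp add: algebra_simps)
  qed
  have "0 < (q - 1) * (A - 1) * ((V - 1) * (V - 1))"
    using q A V by (intro mult_pos_pos) auto
  moreover have "(U - 1) * ((V - 1) * (A * (q - 1) + A * V - 1)) \<le> (U - 1) * (V * V * (q - 1) * (A - 1))"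
    using slope U by (intro mult_left_mono) auto
  moreover have "V * (q - 1) * (A - 1) * (U * V - 1) \<le> V * (q - 1) * (A - 1) * (W - 1)"
    using W q A V by (intro mult_left_mono) auto
  moreover have "(V - 1) * ((A * U - 1) * (q - 1) + (U - 1) * (A * V - 1))
       = (q - 1) * (A - 1) * (V - 1) + (U - 1) * ((V - 1) * (A * (q - 1) + A * V - 1))"
    "(q - 1) * (A - 1) * (V - 1) + (q - 1) * (A - 1) * ((V - 1) * (V - 1))
       + (U - 1) * (V * V * (q - 1) * (A - 1)) = V * (q - 1) * (A - 1) * (U * V - 1)"
    by (simp_all add: algebra_simps)
  ultimately show ?thesis
    unfolding A_def[symmetric] by (simp add: algebra_simps)
qed

lemma gap_of_ratios_offset_zero:
  fixes q Qa Qj Qi Qm T T' S :: real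
  assumes q: "q \<ge> 3" and a: "Qa \<ge> q" and j: "Qj \<ge> q" and i: "Qi \<ge> 1" and m: "Qm \<ge> q * Qi * Qj"
    and T: "T > 0"
    and ratio_T': "(Qa * Qj - 1) * T' = (Qa - 1) * T"
    and ratio_S: "Qj * (q - 1) * (q * Qa - 1) * (Qm - 1) * S = (Qi - 1) * (q * Qa * Qj - 1) * (Qj - 1) * T"
  shows "T' + S < T"
proof -
  have aj: "Qa * Qj \<ge> 9" and qa: "q * Qa \<ge> 9" and qij: "q * Qi * Qj \<ge> 9"
    using mult_mono[of 3 Qa 3 Qj] mult_mono[of 3 q 3 Qa] mult_mono[of 3 "q * Qi" 3 Qj]
      mult_mono[of 3 q 1 Qi] q a j i by auto
  have "(Qa * Qj - 1) * (Qj * T') = Qj * ((Qa * Qj - 1) * T')"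
    by (simp only: mult_ac)
  also have "\<dots> = Qj * (Qa - 1) * T"
    by (simp only: ratio_T' mult.assoc)
  also have "\<dots> \<le> (Qa * Qj - 1) * T"
    using T j q by (intro mult_right_mono) (auto simp: algebra_simps)
  finally have T': "Qj * T' \<le> T"
    using aj by simp
  have "0 \<le> (Qa * Qj - 1) * T'"
    unfolding ratio_T' using T a q by simp
  then have "0 \<le> T'"
    using aj by (simp add: zero_le_mult_iff)
  let ?D = "Qj * (q - 1) * (q * Qa - 1) * (Qm - 1)"
  have D: "?D > 0"
    using j q qa qij m by simp
  have "?D * (4 * S) = 4 * (?D * S)"
    by (simp only: mult_ac)
  also have "\<dots> = 4 * ((Qi - 1) * (q * Qa * Qj - 1) * (Qj - 1)) * T"
    unfolding ratio_S by (simp only: mult_ac)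
  also have "\<dots> \<le> ?D * T"
    using offset_zero_ratio_ineq[OF q a j i m] T by (intro mult_right_mono) (auto simp: mult_ac)
  finally have "4 * S \<le> T"
    using D by (simp only: mult_le_cancel_left_pos)
  moreover have "3 * T' \<le> Qj * T'"
    using \<open>0 \<le> T'\<close> j q by (intro mult_right_mono) auto
  ultimately show ?thesis
    using T' T by linarith
qed

lemma gap_of_ratios_offset_pos:
  fixes q B U V W T R S :: real
  assumes q: "q \<ge> 3" and B: "B \<ge> 1" and U: "U \<ge> 1" and V: "V \<ge> q" and W: "W \<ge> U * V"
    and T: "T > 0"
    and ratio_R: "V * (q * B - 1) * (W - 1) * R = (q * B * U - 1) * (V - 1) * T"
    and ratio_S: "V * (q * B - 1) * (q - 1) * (W - 1) * S = (U - 1) * (q * B * V - 1) * (V - 1) * T"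
  shows "R + S < T"
proof -
  let ?D = "V * (q * B - 1) * (q - 1) * (W - 1)"
  have "q * B \<ge> 3" and "U * V \<ge> 3"
    using mult_mono[of 3 q 1 B] mult_mono[of 1 U 3 V] q B U V by auto
  then have D: "?D > 0"
    using q V W by simp
  have "?D * (R + S) = (q - 1) * (V * (q * B - 1) * (W - 1) * R) + ?D * S"
    by (simp add: algebra_simps)
  also have "\<dots> = T * ((V - 1) * ((q * B * U - 1) * (q - 1) + (U - 1) * (q * B * V - 1)))"
    unfolding ratio_R ratio_S by (simp add: algebra_simps)
  also have "\<dots> < T * ?D"
    using offset_pos_ratio_ineq[OF q B U V W] T by (simp add: mult_ac)
  finally show ?thesis
    using D by (metis mult.commute mult_less_cancel_left_pos)
qed

lemma eig_term_Suc_le: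
  assumes q: "q \<ge> 3" and "i + j \<le> d + k" "k < i" "i \<le> d" "d \<le> m"
  shows "eig_term q m d j i (Suc k) \<le> eig_term q m d j i k"
proof (cases "j \<le> k")
  case True
  then have "eig_term q m d j i (Suc k) = 0"
    using eig_term_eq_0_above[of q j "Suc k" m] q assms by simp
  then show ?thesis using eig_term_nonneg[of q] q by simp
next
  case False
  have q1: "q > 1" using q by simp
  define B where "B = q ^ k"
  define X where "X = q ^ (i - k)"
  define Y where "Y = q ^ (j - k)"
  define E where "E = q ^ (d - i + Suc k - j)"
  define W where "W = q ^ (m - k)"
  have "d - i + Suc k = (d - i + Suc k - j) + (j - k) + k"
    using False assms by auto
  then have "q ^ (d - i + Suc k) = E * Y * B"
    unfolding B_def Y_def E_def by (metis power_add)
  then have ratio: "Y * (q * B - 1) * (E - 1) * (W - 1) * eig_term q m d j i (Suc k)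
      = (X - 1) * (E * Y * B - 1) * (Y - 1) * eig_term q m d j i k"
    using eig_term_Suc_ratio[OF q1, of i j d k m] False assms
    unfolding B_def X_def Y_def E_def W_def by simp
  have "X * Y = q ^ (i - k + (j - k))"
    unfolding X_def Y_def by (simp add: power_add)
  also have "\<dots> \<le> W"
    unfolding W_def using assms q by (intro power_increasing) auto
  finally have W: "X * Y \<le> W" .
  have B: "B \<ge> 1" and X: "X \<ge> q" and Y: "Y \<ge> q" and E: "E \<ge> q"
    unfolding B_def X_def Y_def E_def using q False assms by (auto intro: self_le_power)
  have "Y * (q * B - 1) * (E - 1) * (W - 1) * eig_term q m d j i (Suc k)
      \<le> Y * (q * B - 1) * (E - 1) * (W - 1) * eig_term q m d j i k"
    unfolding ratio
    using consecutive_ratio_ineq[OF q B X Y E W] eig_term_nonneg[OF q1] by (rule mult_right_mono)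
  moreover have "Y * (q * B - 1) * (E - 1) * (W - 1) > 0"
  proof -
    have "q * 1 \<le> q * B" "1 * q \<le> X * Y"
      using mult_left_mono[OF B, of q] mult_mono[of 1 X q Y] q X Y by auto
    then have "1 < q * B" "1 < W"
      using q W by linarith+
    then show ?thesis
      using q Y E by (intro mult_pos_pos) auto
  qed
  ultimately show ?thesis
    by (simp only: mult_le_cancel_left_pos)
qed

lemma eig_term_gap_offset_zero:
  assumes q: "q \<ge> 3" and ij: "i + j < d" and "1 \<le> j" "d \<le> m"
  shows "eig_term q m d j (Suc i) 0 + eig_term q m d j i 1 < eig_term q m d j i 0"
proof -
  have q1: "q > 1" using q by simp
  define Qa where "Qa = q ^ (d - i - j)"
  define Qj where "Qj = q ^ j"
  define Qi where "Qi = q ^ i"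
  define Qm where "Qm = q ^ m"
  have "d - i = (d - i - j) + j" "d - i + Suc 0 - j = Suc (d - i - j)"
    "d - i + Suc 0 = Suc ((d - i - j) + j)"
    using ij by auto
  then have pows: "q ^ (d - i) = Qa * Qj" "q ^ (d - i + Suc 0 - j) = q * Qa"
    "q ^ (d - i + Suc 0) = q * Qa * Qj"
    unfolding Qa_def Qj_def by (metis power_add power_Suc mult.assoc)+
  have ratio_T': "(Qa * Qj - 1) * eig_term q m d j (Suc i) 0 = (Qa - 1) * eig_term q m d j i 0"
    using eig_term_Suc_0_ratio[OF q1 ij, of m] unfolding pows Qa_def .
  have "q ^ (j - 0) * (q ^ Suc 0 - 1) * (q ^ (d - i + Suc 0 - j) - 1) * (q ^ (m - 0) - 1)
      * eig_term q m d j i (Suc 0)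
    = (q ^ (i - 0) - 1) * (q ^ (d - i + Suc 0) - 1) * (q ^ (j - 0) - 1) * eig_term q m d j i 0"
    by (rule eig_term_Suc_ratio[OF q1]) (use assms in auto)
  then have ratio_S: "Qj * (q - 1) * (q * Qa - 1) * (Qm - 1) * eig_term q m d j i 1
      = (Qi - 1) * (q * Qa * Qj - 1) * (Qj - 1) * eig_term q m d j i 0"
    unfolding pows diff_zero power_Suc0_right One_nat_def Qj_def[symmetric] Qi_def[symmetric]
      Qm_def[symmetric] .
  have "q * Qi * Qj = q ^ (Suc (i + j))"
    unfolding Qi_def Qj_def by (simp add: power_add)
  also have "\<dots> \<le> Qm"
    unfolding Qm_def using assms q by (intro power_increasing) auto
  finally have m: "q * Qi * Qj \<le> Qm" .
  have "Qa \<ge> q" "Qj \<ge> q" "Qi \<ge> 1"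
    unfolding Qa_def Qj_def Qi_def using q assms by (auto intro: self_le_power)
  moreover have "eig_term q m d j i 0 > 0"
    using eig_term_pos[OF q1] assms by simp
  ultimately show ?thesis
    using gap_of_ratios_offset_zero[OF q _ _ _ m _ ratio_T' ratio_S] by blast
qed

lemma eig_term_gap_offset_pos:
  assumes q: "q \<ge> 3" and "i < d" "j \<le> d" "d \<le> m" "d \<le> i + j"
  defines "k \<equiv> i + j - d"
  shows "eig_term q m d j (Suc i) (Suc k) + eig_term q m d j i (Suc k) < eig_term q m d j i k"
proof -
  have q1: "q > 1" using q by simp
  have k: "k \<le> i" "k < j" "i + j \<le> d + k" "i - k + (j - k) \<le> m - k"
    using assms(2-5) unfolding k_def by auto
  define B where "B = q ^ k"
  define U where "U = q ^ (i - k)"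
  define V where "V = q ^ (j - k)"
  define W where "W = q ^ (m - k)"
  have "Suc i = Suc (k + (i - k))" "d - i + Suc k = Suc (k + (j - k))" "d - i + Suc k - j = 1"
    using assms(2-5) unfolding k_def by auto
  then have pows: "q ^ Suc k = q * B" "q ^ Suc i = q * B * U" "q ^ (d - i + Suc k) = q * B * V"
    "q ^ (d - i + Suc k - j) = q"
    unfolding B_def U_def V_def by (metis power_add power_Suc power_one_right mult.assoc)+
  have "q ^ (j - k) * (q ^ Suc k - 1) * (q ^ (m - k) - 1) * eig_term q m d j (Suc i) (Suc k)
    = (q ^ Suc i - 1) * (q ^ (j - k) - 1) * eig_term q m d j i k"
    by (rule eig_term_Suc_Suc_ratio[OF q1]) (use k assms(2-4) in auto)
  then have ratio_R: "V * (q * B - 1) * (W - 1) * eig_term q m d j (Suc i) (Suc k)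
      = (q * B * U - 1) * (V - 1) * eig_term q m d j i k"
    unfolding pows V_def[symmetric] W_def[symmetric] .
  have "q ^ (j - k) * (q ^ Suc k - 1) * (q ^ (d - i + Suc k - j) - 1) * (q ^ (m - k) - 1)
      * eig_term q m d j i (Suc k)
    = (q ^ (i - k) - 1) * (q ^ (d - i + Suc k) - 1) * (q ^ (j - k) - 1) * eig_term q m d j i k"
    by (rule eig_term_Suc_ratio[OF q1]) (use k assms(2-4) in auto)
  then have ratio_S: "V * (q * B - 1) * (q - 1) * (W - 1) * eig_term q m d j i (Suc k)
      = (U - 1) * (q * B * V - 1) * (V - 1) * eig_term q m d j i k"
    unfolding pows U_def[symmetric] V_def[symmetric] W_def[symmetric] .
  have "U * V = q ^ (i - k + (j - k))"
    unfolding U_def V_def by (simp add: power_add)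
  also have "\<dots> \<le> W"
    unfolding W_def using k q by (intro power_increasing) auto
  finally have W: "U * V \<le> W" .
  have "B \<ge> 1" "U \<ge> 1" "V \<ge> q"
    unfolding B_def U_def V_def using q k by (auto intro: self_le_power)
  moreover have "eig_term q m d j i k > 0"
    using eig_term_pos[OF q1] k assms(2) by simp
  ultimately show ?thesis
    using gap_of_ratios_offset_pos[OF q _ _ _ W _ ratio_R ratio_S] by blast
qed

lemma eig_term_gap:
  assumes "q \<ge> 3" "i < d" "1 \<le> j" "j \<le> d" "d \<le> m"
  shows "eig_term q m d j (Suc i) (Suc i + j - d) + eig_term q m d j i (Suc (i + j - d))
    < eig_term q m d j i (i + j - d)"
proof (cases "i + j < d")
  case True
  then show ?thesis using eig_term_gap_offset_zero[of q i j d m] assms by simp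
next
  case False
  then have "Suc i + j - d = Suc (i + j - d)" by simp
  then show ?thesis using eig_term_gap_offset_pos[of q i d j m] False assms by simp
qed

lemma abs_Geig_bounds:
  assumes q: "q \<ge> 3" and "i \<le> d" "j \<le> d" "d \<le> m"
  shows "\<bar>Geig q (int (m + d)) (int d) (int j) (int i)\<bar> \<le> eig_term q m d j i (i + j - d)"
    and "eig_term q m d j i (i + j - d) - eig_term q m d j i (Suc (i + j - d))
      \<le> \<bar>Geig q (int (m + d)) (int d) (int j) (int i)\<bar>"
proof -
  have q1: "q > 1" using q by simp
  note sum = Geig_eq_alternating_sum[OF q1 assms(2-4)]
  note bounds = abs_alternating_sum_bounds[where f = "eig_term q m d j i" and l = "i + j - d" and N = i]
  show "\<bar>Geig q (int (m + d)) (int d) (int j) (int i)\<bar> \<le> eig_term q m d j i (i + j - d)"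
    "eig_term q m d j i (i + j - d) - eig_term q m d j i (Suc (i + j - d))
      \<le> \<bar>Geig q (int (m + d)) (int d) (int j) (int i)\<bar>"
    unfolding sum
    using bounds eig_term_eq_0_below[OF q1 assms(2)] eig_term_Suc_le[OF q] eig_term_nonneg[OF q1]
      assms by auto
qed

theorem theorem3p4:
  fixes q n d i j :: nat
  assumes "\<exists>p k. prime p \<and> k \<ge> 1 \<and> q = p ^ k"
    and "q \<ge> 3"
    and "2 * d \<le> n" and "1 \<le> d"
    and "i \<le> d - 1"
    and "1 \<le> j" and "j \<le> d"
  shows "\<bar>Geig (real q) (int n) (int d) (int j) (int i + 1)\<bar>
           < \<bar>Geig (real q) (int n) (int d) (int j) (int i)\<bar>"
proof -
  define m where "m = n - d"
  have n: "n = m + d" and dm: "d \<le> m" and id: "i < d" and q: "real q \<ge> 3"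
    using assms(2-5) unfolding m_def by auto
  let ?T = "eig_term (real q) m d j"
  have "\<bar>Geig (real q) (int (m + d)) (int d) (int j) (int i + 1)\<bar> \<le> ?T (Suc i) (Suc i + j - d)"
    using abs_Geig_bounds(1)[OF q, of "Suc i" d j m] id dm assms(7) by (simp add: add.commute)
  moreover have "?T i (i + j - d) - ?T i (Suc (i + j - d))
      \<le> \<bar>Geig (real q) (int (m + d)) (int d) (int j) (int i)\<bar>"
    using abs_Geig_bounds(2)[OF q, of i d j m] id dm assms(7) by simp
  moreover have "?T (Suc i) (Suc i + j - d) + ?T i (Suc (i + j - d)) < ?T i (i + j - d)"
    using eig_term_gap[OF q id assms(6,7) dm] .
  moreover have "0 \<le> ?T i (Suc (i + j - d))"
    using eig_term_nonneg q by simp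
  ultimately show ?thesis
    unfolding n by linarith
qed

end
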